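(* Let $\varepsilon>0$ and $K=\lceil 3mn/\varepsilon\rceil$. Let items $g_{ji}\in M$ (ordered pairs $j\ne i$) be given and let $\mathcal{A}=(A_1,\dots,A_n)$ be an allocation of $M$ with $g_{ji}\in A_j$ for all $j\ne i$. If the allocation $\mathcal{A}'=(A_1\cup\{d_1\},\dots,A_n\cup\{d_n\})$ is envy-free with respect to the rounded valuations $\overline v_1,\dots,\overline v_n$ (i.e. $\overline v_i(A_i\cup\{d_i\})\ge\overline v_i(A_j\cup\{d_j\})$ for all $i\ne j$), then for all $i\ne j$, $v_i(A_i)\ge(1-\varepsilon)\,v_i(A_j\setminus\{g_{ji}\})$; in particular $\mathcal{A}$ is $(1-\varepsilon)$-approximate EF1 with respect to $v_1,\dots,v_n$.
   Context: Agents $[n]$, items $M=[m]$, additive valuations $v_i$. For $\alpha\in(0,1]$, an allocation is $\alpha$-approximate EF1 if for all $i\ne j$ with $A_j\ne\emptyset$ there exists $g\in A_j$ with $v_i(A_i)\ge\alpha\,v_i(A_j\setminus\{g\})$. Rounded instance: given integer $K\ge1$ and items $g_{ji}\in M$ for ordered pairs $j\ne i$, let $Y_i=\{g_{ji}: j\ne i\}$, $V_i=v_i(M\setminus Y_i)$, $\tau_i=V_i/K$. Define additive $\overline v_i$ on $M\cup\{d_1,\dots,d_n\}$ ($d_1,\dots,d_n$ new dummy items): for $o\in M\setminus Y_i$, $\overline v_i(o)=\max\{k\tau_i:k\in\mathbb{Z}_{\ge0},\,k\tau_i\le v_i(o)\}$ (and $\overline v_i(o)=0$ if $\tau_i=0$);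 $\overline v_i(o)=0$ for $o\in Y_i$; $\overline v_i(d_i)=m\tau_i$ and $\overline v_i(d_j)=0$ for $j\ne i$. *)

theory Defs
  imports Complex_Main
begin

text \<open>Valuations v :: nat => 'm => real are additive: v i applied to a set S is sum (v i) S.
  The rounded instance lives on items of type 'm + nat: Inl o is the real item o,
  Inr j is the dummy item d_j.\<close>

definition Ygoods :: "nat \<Rightarrow> (nat \<Rightarrow> nat \<Rightarrow> 'm) \<Rightarrow> nat \<Rightarrow> 'm set" where
  "Ygoods n g i = {g j i | j. j < n \<and> j \<noteq> i}"

definition tau :: "nat \<Rightarrow> 'm set \<Rightarrow> (nat \<Rightarrow> 'm \<Rightarrow> real) \<Rightarrow> (nat \<Rightarrow> nat \<Rightarrow> 'm) \<Rightarrow> nat \<Rightarrow> nat \<Rightarrow> real" where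
  "tau n M v g K i = sum (v i) (M - Ygoods n g i) / real K"

definition vbar :: "nat \<Rightarrow> 'm set \<Rightarrow> (nat \<Rightarrow> 'm \<Rightarrow> real) \<Rightarrow> (nat \<Rightarrow> nat \<Rightarrow> 'm) \<Rightarrow> nat
    \<Rightarrow> nat \<Rightarrow> 'm + nat \<Rightarrow> real" where
  "vbar n M v g K i x =
     (let t = tau n M v g K i in
      case x of
        Inl y \<Rightarrow> (if y \<in> Ygoods n g i then 0
                  else if t = 0 then 0
                  else Max {real k * t | k :: nat. real k * t \<le> v i y})
      | Inr j \<Rightarrow> (if j = i then real (card M) * t else 0))"

definition approx_EF1 :: "nat \<Rightarrow> (nat \<Rightarrow> 'm \<Rightarrow> real) \<Rightarrow> real \<Rightarrow> (nat \<Rightarrow> 'm set) \<Rightarrow> bool" where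
  "approx_EF1 n v \<alpha> A \<longleftrightarrow>
     (\<forall>i<n. \<forall>j<n. i \<noteq> j \<longrightarrow> A j \<noteq> {} \<longrightarrow>
        (\<exists>x\<in>A j. sum (v i) (A i) \<ge> \<alpha> * sum (v i) (A j - {x})))"

definition is_allocation :: "nat \<Rightarrow> 'm set \<Rightarrow> (nat \<Rightarrow> 'm set) \<Rightarrow> bool" where
  "is_allocation n M A \<longleftrightarrow>
     (\<forall>i<n. A i \<subseteq> M) \<and> (\<Union>i<n. A i) = M \<and>
     (\<forall>i<n. \<forall>j<n. i \<noteq> j \<longrightarrow> A i \<inter> A j = {})"

end

theory Submission
  imports Defs
begin

text \<open>Fix agents \<open>i \<noteq> j\<close>, let \<open>w\<close> be the rounded valuation of \<open>i\<close>, and write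
  \<open>t = \<tau>\<^sub>i\<close>, \<open>c = m t\<close>. Rounding costs at most \<open>t\<close> per item outside \<open>Y\<^sub>i\<close>, and
  \<open>Y\<^sub>i \<inter> A\<^sub>j = {g\<^sub>j\<^sub>i}\<close>, so envy-freeness of the rounded instance gives
  \<open>v\<^sub>i(A\<^sub>j - g\<^sub>j\<^sub>i) - c \<le> w(A\<^sub>j) \<le> w(A\<^sub>i) + c \<le> v\<^sub>i(A\<^sub>i) + c\<close>. Summing the
  envy-freeness inequalities over all \<open>j\<close> gives \<open>V\<^sub>i - c \<le> n (v\<^sub>i(A\<^sub>i) + c)\<close>, i.e. agent
  \<open>i\<close> holds about a \<open>1/n\<close> share of \<open>V\<^sub>i\<close>, while the choice of \<open>K\<close> makes \<open>c \<le> \<epsilon> V\<^sub>i / (3n)\<close>.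
  Either the additive error \<open>2c\<close> is at most \<open>\<epsilon> v\<^sub>i(A\<^sub>j - g\<^sub>j\<^sub>i)\<close>, or \<open>v\<^sub>i(A\<^sub>j - g\<^sub>j\<^sub>i)\<close> is
  below two thirds of the fair share, which \<open>v\<^sub>i(A\<^sub>i)\<close> already covers.\<close>

lemma Max_multiples_le_bounds:
  fixes t x :: real
  assumes t: "t > 0" and x: "x \<ge> 0"
  shows "Max {real k * t | k::nat. real k * t \<le> x} \<le> x"
    and "Max {real k * t | k::nat. real k * t \<le> x} \<ge> x - t"
    and "Max {real k * t | k::nat. real k * t \<le> x} \<ge> 0"
proof -
  define S where "S = {real k * t | k::nat. real k * t \<le> x}"
  define k0 where "k0 = nat \<lfloor>x / t\<rfloor>"
  have "S \<subseteq> (\<lambda>k. real k * t) ` {..k0}"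
  proof
    fix y assume "y \<in> S"
    then obtain k where k: "y = real k * t" "real k * t \<le> x" unfolding S_def by blast
    have "real k \<le> x / t" using k t by (simp add: pos_le_divide_eq)
    hence "k \<le> k0" unfolding k0_def by linarith
    thus "y \<in> (\<lambda>k. real k * t) ` {..k0}" using k by auto
  qed
  hence fin: "finite S" using finite_surj by blast
  have k0: "real k0 = of_int \<lfloor>x / t\<rfloor>" unfolding k0_def using x t by simp
  hence "real k0 \<le> x / t" by linarith
  hence "real k0 * t \<le> x" using t by (simp add: pos_le_divide_eq)
  hence k0S: "real k0 * t \<in> S" unfolding S_def by blast
  have "x / t < real k0 + 1" using k0 by linarith
  hence "x - t < real k0 * t" using t by (simp add: pos_divide_less_eq algebra_simps)
  moreover have "Max S \<in> S" using fin k0S Max_in by blast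
  moreover have "real k0 * t \<le> Max S" using fin k0S by simp
  moreover have "real k0 * t \<ge> 0" using t by simp
  ultimately show "Max S \<le> x" "Max S \<ge> x - t" "Max S \<ge> 0"
    unfolding S_def by auto
qed

lemma tau_nonneg:
  assumes "finite M" and "\<forall>x\<in>M. v i x \<ge> 0"
  shows "tau n M v g K i \<ge> 0"
  unfolding tau_def using assms by (intro divide_nonneg_nonneg sum_nonneg) auto

lemma vbar_Inr: "vbar n M v g K i (Inr j) = (if j = i then real (card M) * tau n M v g K i else 0)"
  unfolding vbar_def Let_def by simp

lemma vbar_Inl_bounds:
  assumes "finite M" and vnonneg: "\<forall>x\<in>M. v i x \<ge> 0" and y: "y \<in> M"
  shows "0 \<le> vbar n M v g K i (Inl y)" and "vbar n M v g K i (Inl y) \<le> v i y"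
proof -
  have t: "tau n M v g K i \<ge> 0" using tau_nonneg assms by blast
  have "0 \<le> vbar n M v g K i (Inl y) \<and> vbar n M v g K i (Inl y) \<le> v i y"
    using Max_multiples_le_bounds[of "tau n M v g K i" "v i y"] vnonneg y t
    unfolding vbar_def Let_def by auto
  thus "0 \<le> vbar n M v g K i (Inl y)" "vbar n M v g K i (Inl y) \<le> v i y" by auto
qed

text \<open>For \<open>K = 0\<close> the division in \<open>tau\<close> yields \<open>0\<close> and every item is rounded down to \<open>0\<close>.\<close>

lemma vbar_Inl_lower:
  assumes finM: "finite M" and vnonneg: "\<forall>x\<in>M. v i x \<ge> 0" and K: "K > 0"
    and y: "y \<in> M - Ygoods n g i"
  shows "vbar n M v g K i (Inl y) \<ge> v i y - tau n M v g K i"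
proof (cases "tau n M v g K i = 0")
  case True
  have "v i y \<le> sum (v i) (M - Ygoods n g i)"
    using y finM vnonneg by (intro member_le_sum) auto
  also have "\<dots> = 0" using True K unfolding tau_def by simp
  finally have "v i y \<le> 0" .
  moreover have "0 \<le> vbar n M v g K i (Inl y)"
    using y finM vnonneg by (intro vbar_Inl_bounds(1)) auto
  ultimately show ?thesis using True by linarith
next
  case False
  moreover have "tau n M v g K i \<ge> 0" using finM vnonneg by (rule tau_nonneg)
  ultimately have "tau n M v g K i > 0" by linarith
  thus ?thesis using Max_multiples_le_bounds(2)[of "tau n M v g K i" "v i y"] vnonneg y False
    unfolding vbar_def Let_def by auto
qed

lemma sum_vbar_with_dummy:
  assumes "finite S"
  shows "sum (vbar n M v g K i) (Inl ` S \<union> {Inr k})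
           = (\<Sum>y\<in>S. vbar n M v g K i (Inl y)) + vbar n M v g K i (Inr k)"
proof -
  have "sum (vbar n M v g K i) (Inl ` S) = (\<Sum>y\<in>S. vbar n M v g K i (Inl y))"
    by (rule sum.reindex_cong[where l = Inl]) auto
  thus ?thesis using assms by (subst sum.union_disjoint) auto
qed

lemma sum_vbar_le:
  assumes "finite M" and "\<forall>x\<in>M. v i x \<ge> 0" and "S \<subseteq> M"
  shows "(\<Sum>y\<in>S. vbar n M v g K i (Inl y)) \<le> sum (v i) S"
  using assms by (intro sum_mono vbar_Inl_bounds(2)) auto

lemma sum_vbar_ge:
  assumes finM: "finite M" and vnonneg: "\<forall>x\<in>M. v i x \<ge> 0" and K: "K > 0"
    and S: "S \<subseteq> M"
  shows "(\<Sum>y\<in>S. vbar n M v g K i (Inl y))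
           \<ge> sum (v i) (S - Ygoods n g i) - real (card M) * tau n M v g K i"
proof -
  let ?w = "\<lambda>y. vbar n M v g K i (Inl y)" and ?t = "tau n M v g K i" and ?S = "S - Ygoods n g i"
  have "?t \<ge> 0" using finM vnonneg by (rule tau_nonneg)
  hence "real (card ?S) * ?t \<le> real (card M) * ?t"
    using card_mono[OF finM, of ?S] S
    by (intro mult_right_mono) auto
  moreover have "(\<Sum>y\<in>?S. v i y - ?t) \<le> sum ?w ?S"
    using S finM vnonneg K by (intro sum_mono vbar_Inl_lower) auto
  moreover have "sum ?w ?S \<le> sum ?w S"
    using S finM vnonneg finite_subset[OF S finM] by (intro sum_mono2 vbar_Inl_bounds(1)) auto
  ultimately show ?thesis by (simp add: sum_subtractf)
qed

lemma allocation_diff_Ygoods: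
  assumes disj: "\<And>k l. k < n \<Longrightarrow> l < n \<Longrightarrow> k \<noteq> l \<Longrightarrow> A k \<inter> A l = {}"
    and gA: "\<And>k. k < n \<Longrightarrow> k \<noteq> i \<Longrightarrow> g k i \<in> A k"
    and j: "j < n" "j \<noteq> i"
  shows "A j - Ygoods n g i = A j - {g j i}"
proof -
  have "y \<notin> A j" if "k < n" "k \<noteq> i" "k \<noteq> j" "y = g k i" for k y
    using that disj[of k j] gA[of k] j by blast
  thus ?thesis using j unfolding Ygoods_def by blast
qed

lemma rounding_error_bound:
  fixes \<epsilon> V :: real and m n K :: nat
  assumes eps: "\<epsilon> > 0" and V: "V \<ge> 0" and Kdef: "K = nat \<lceil>3 * real m * real n / \<epsilon>\<rceil>"
  shows "3 * real n * (real m * (V / real K)) \<le> \<epsilon> * V"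
proof (cases "K = 0")
  case False
  have "3 * real m * real n / \<epsilon> \<le> real K" using Kdef by linarith
  hence "3 * real m * real n \<le> \<epsilon> * real K" using eps by (simp add: divide_le_eq mult.commute)
  hence "V * (3 * real m * real n) \<le> V * (\<epsilon> * real K)" using V by (rule mult_left_mono)
  thus ?thesis using False by (simp add: field_simps)
qed (use eps V in simp)

text \<open>Here \<open>a = v\<^sub>i(A\<^sub>i)\<close>, \<open>X = v\<^sub>i(A\<^sub>j - g\<^sub>j\<^sub>i)\<close> and \<open>c = m \<tau>\<^sub>i\<close>.\<close>

lemma approx_envy_from_bounds:
  fixes a X V c \<epsilon> :: real and n :: nat
  assumes n: "n > 0" and eps: "\<epsilon> > 0" and X: "X \<ge> 0" and a: "a \<ge> 0" and c: "c \<ge> 0"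
    and pair: "a \<ge> X - 2 * c"
    and share: "real n * (a + c) \<ge> V - c"
    and err: "3 * real n * c \<le> \<epsilon> * V"
  shows "(1 - \<epsilon>) * X \<le> a"
proof -
  define u where "u = V / real n"
  have V: "V = real n * u" unfolding u_def using n by simp
  have cu: "3 * c \<le> \<epsilon> * u" using err n unfolding V by (simp add: mult.assoc)
  have "c \<le> real n * c" using c n by (simp add: mult_le_cancel_right1)
  hence "real n * (u - c) \<le> real n * (a + c)" using share unfolding V by (simp add: algebra_simps)
  hence au: "u - 2 * c \<le> a" using n by (simp add: mult_le_cancel_left)
  have "0 \<le> \<epsilon> * u" using cu c by linarith
  hence u: "u \<ge> 0" using eps by (simp add: zero_le_mult_iff)
  consider "\<epsilon> \<ge> 1" | "\<epsilon> * X \<ge> 2 * c" | "\<epsilon> < 1" "\<epsilon> * X < 2 * c" by linarith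
  thus ?thesis
  proof cases
    case 1
    hence "(1 - \<epsilon>) * X \<le> 0" using X by (simp add: mult_nonpos_nonneg)
    thus ?thesis using a by linarith
  next
    case 2
    thus ?thesis using pair by (simp add: algebra_simps)
  next
    case 3
    have "\<epsilon> * (3 * X) < \<epsilon> * (2 * u)" using 3 cu by linarith
    hence "3 * X < 2 * u" using eps by (simp add: mult_less_cancel_left)
    hence "(1 - \<epsilon>) * (3 * X) \<le> (1 - \<epsilon>) * (2 * u)" using 3 by (intro mult_left_mono) auto
    thus ?thesis using au cu u eps by (simp add: algebra_simps)
  qed
qed

lemma rounded_EF_imp_approx_envy:
  fixes n :: nat and M :: "'m set" and v :: "nat \<Rightarrow> 'm \<Rightarrow> real"
    and g :: "nat \<Rightarrow> nat \<Rightarrow> 'm" and A :: "nat \<Rightarrow> 'm set" and \<epsilon> :: real and K :: nat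
  assumes finM: "finite M"
    and vnonneg: "\<And>i x. i < n \<Longrightarrow> x \<in> M \<Longrightarrow> v i x \<ge> 0"
    and eps: "\<epsilon> > 0"
    and Kdef: "K = nat \<lceil>3 * real (card M) * real n / \<epsilon>\<rceil>"
    and alloc: "is_allocation n M A"
    and gA: "\<And>i j. i < n \<Longrightarrow> j < n \<Longrightarrow> j \<noteq> i \<Longrightarrow> g j i \<in> A j"
    and EF: "\<And>i j. i < n \<Longrightarrow> j < n \<Longrightarrow> i \<noteq> j \<Longrightarrow>
               sum (vbar n M v g K i) (Inl ` A i \<union> {Inr i})
                 \<ge> sum (vbar n M v g K i) (Inl ` A j \<union> {Inr j})"
    and ij: "i < n" "j < n" "i \<noteq> j"
  shows "sum (v i) (A i) \<ge> (1 - \<epsilon>) * sum (v i) (A j - {g j i})"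
proof -
  have sub: "\<And>k. k < n \<Longrightarrow> A k \<subseteq> M" and cover: "(\<Union>k<n. A k) = M"
    and disj: "\<And>k l. k < n \<Longrightarrow> l < n \<Longrightarrow> k \<noteq> l \<Longrightarrow> A k \<inter> A l = {}"
    using alloc unfolding is_allocation_def by auto
  have finA: "\<And>k. k < n \<Longrightarrow> finite (A k)" using sub finM finite_subset by blast
  have vi: "\<forall>x\<in>M. v i x \<ge> 0" using vnonneg ij by blast
  let ?w = "\<lambda>y. vbar n M v g K i (Inl y)"
  define V where "V = sum (v i) (M - Ygoods n g i)"
  define c where "c = real (card M) * tau n M v g K i"
  have "g j i \<in> M" using gA sub ij by blast
  hence "card M > 0" using finM card_gt_0_iff by blast
  hence K: "K > 0" using Kdef eps ij by simp
  have c: "c \<ge> 0" unfolding c_def using finM vi by (simp add: tau_nonneg)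
  have wAi: "sum ?w (A i) \<le> sum (v i) (A i)" using finM vi sub[OF ij(1)] by (rule sum_vbar_le)
  have envy: "sum ?w (A k) \<le> sum ?w (A i) + c" if k: "k < n" for k
  proof (cases "k = i")
    case False
    hence "sum ?w (A k) + vbar n M v g K i (Inr k) \<le> sum ?w (A i) + vbar n M v g K i (Inr i)"
      using EF[OF ij(1) k] False
      unfolding sum_vbar_with_dummy[OF finA[OF ij(1)]] sum_vbar_with_dummy[OF finA[OF k]] by blast
    with False show ?thesis by (simp add: vbar_Inr c_def)
  qed (use c in simp)
  have "sum (v i) (A j - Ygoods n g i) - c \<le> sum ?w (A j)"
    unfolding c_def using finM vi K sub[OF ij(2)] by (rule sum_vbar_ge)
  moreover have "A j - Ygoods n g i = A j - {g j i}"
    using disj gA ij by (intro allocation_diff_Ygoods) auto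
  ultimately have "sum (v i) (A j - {g j i}) - c \<le> sum ?w (A j)" by simp
  hence pair: "sum (v i) (A i) \<ge> sum (v i) (A j - {g j i}) - 2 * c"
    using envy[OF ij(2)] wAi by linarith
  have "V - c \<le> sum ?w M" unfolding V_def c_def using finM vi K subset_refl by (rule sum_vbar_ge)
  also have "\<dots> = (\<Sum>k<n. sum ?w (A k))"
    unfolding cover[symmetric] using finA disj by (intro sum.UNION_disjoint) auto
  also have "\<dots> \<le> (\<Sum>k<n. sum (v i) (A i) + c)"
    using envy wAi by (intro sum_mono) fastforce
  finally have share: "V - c \<le> real n * (sum (v i) (A i) + c)" by simp
  have "V \<ge> 0" unfolding V_def using vi by (intro sum_nonneg) auto
  moreover have "c = real (card M) * (V / real K)" unfolding c_def V_def tau_def ..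
  ultimately have err: "3 * real n * c \<le> \<epsilon> * V" using rounding_error_bound[OF eps _ Kdef] by simp
  have "sum (v i) (A j - {g j i}) \<ge> 0" "sum (v i) (A i) \<ge> 0"
    using vi sub[OF ij(1)] sub[OF ij(2)] by (auto intro!: sum_nonneg)
  with ij show ?thesis using approx_envy_from_bounds[OF _ eps _ _ c pair share err] by simp
qed

theorem lemma4:
  fixes n :: nat and M :: "'m set" and v :: "nat \<Rightarrow> 'm \<Rightarrow> real"
    and g :: "nat \<Rightarrow> nat \<Rightarrow> 'm" and A :: "nat \<Rightarrow> 'm set" and \<epsilon> :: real and K :: nat
  assumes finM: "finite M"
    and vnonneg: "\<And>i x. i < n \<Longrightarrow> x \<in> M \<Longrightarrow> v i x \<ge> 0"
    and eps: "\<epsilon> > 0"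
    and Kdef: "K = nat \<lceil>3 * real (card M) * real n / \<epsilon>\<rceil>"
    and alloc: "is_allocation n M A"
    and gA: "\<And>i j. i < n \<Longrightarrow> j < n \<Longrightarrow> j \<noteq> i \<Longrightarrow> g j i \<in> A j"
    and EF: "\<And>i j. i < n \<Longrightarrow> j < n \<Longrightarrow> i \<noteq> j \<Longrightarrow>
               sum (vbar n M v g K i) (Inl ` A i \<union> {Inr i})
                 \<ge> sum (vbar n M v g K i) (Inl ` A j \<union> {Inr j})"
  shows "(\<forall>i<n. \<forall>j<n. i \<noteq> j \<longrightarrow>
            sum (v i) (A i) \<ge> (1 - \<epsilon>) * sum (v i) (A j - {g j i}))
         \<and> approx_EF1 n v (1 - \<epsilon>) A"
proof -
  have approx: "\<forall>i<n. \<forall>j<n. i \<noteq> j \<longrightarrow>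
                  sum (v i) (A i) \<ge> (1 - \<epsilon>) * sum (v i) (A j - {g j i})"
    using rounded_EF_imp_approx_envy[OF finM vnonneg eps Kdef alloc gA EF] by blast
  moreover have "approx_EF1 n v (1 - \<epsilon>) A"
    unfolding approx_EF1_def using approx gA by blast
  ultimately show ?thesis by blast
qed

end
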